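(* Under the hypotheses of Proposition 5 (namely $\alpha_1,\dots,\alpha_K\in\mathbb R^d\setminus\{0\}$, $\eta_1,\dots,\eta_J\in\mathbb R^d$ and $\|\pi(\eta_1)\|>\max_{j\ge2}\|\pi(\eta_j)\|$), one has $(\eta_1-\eta_j)^{T}\pi(\eta_1)>0$ for every $j=2,\dots,J$.
   Context: Canonical projection: for $\eta\ne0$, choose a (possibly empty) subset $\{\alpha_{k_1},\dots,\alpha_{k_m}\}$ of $\{\alpha_1,\dots,\alpha_K\}$, $\mathcal H_\eta$ its span, such that $P_{\mathcal H_\eta}\eta=\sum_p\gamma_{k_p}\alpha_{k_p}$ with all $\gamma_{k_p}\ge0$ and $\alpha_k^{T}P_{\mathcal H_\eta^\perp}\eta<0$ for all $k\notin\{k_1,\dots,k_m\}$; such a subset exists and $\pi(\eta):=P_{\mathcal H_\eta^\perp}\eta$ is uniquely determined and continuous in $\eta$ (set $\pi(0)=0$). $P$ denotes orthogonal projection. *)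

theory Defs
  imports "HOL-Analysis.Analysis"
begin

definition orth_proj :: "'a::euclidean_space set \<Rightarrow> 'a \<Rightarrow> 'a" where
  "orth_proj V x = closest_point V x"

definition orth_proj_perp :: "'a::euclidean_space set \<Rightarrow> 'a \<Rightarrow> 'a" where
  "orth_proj_perp V x = x - orth_proj V x"

definition canon_subset :: "(nat \<Rightarrow> 'a::euclidean_space) \<Rightarrow> nat \<Rightarrow> 'a \<Rightarrow> nat set \<Rightarrow> bool" where
  "canon_subset alpha K eta S \<longleftrightarrow>
     S \<subseteq> {1..K} \<and>
     (\<exists>\<gamma>::nat \<Rightarrow> real. (\<forall>k\<in>S. \<gamma> k \<ge> 0) \<and>
        orth_proj (span (alpha ` S)) eta = (\<Sum>k\<in>S. \<gamma> k *\<^sub>R alpha k)) \<and>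
     (\<forall>k\<in>{1..K} - S. alpha k \<bullet> orth_proj_perp (span (alpha ` S)) eta < 0)"

definition canon_proj :: "(nat \<Rightarrow> 'a::euclidean_space) \<Rightarrow> nat \<Rightarrow> 'a \<Rightarrow> 'a" where
  "canon_proj alpha K eta =
     (if eta = 0 then 0
      else orth_proj_perp (span (alpha ` (SOME S. canon_subset alpha K eta S))) eta)"

end

theory Submission
  imports Defs
begin

text \<open>
  Write \<open>\<eta> = P\<^sub>H \<eta> + \<pi>(\<eta>)\<close>, where \<open>P\<^sub>H \<eta>\<close> is a nonnegative combination of the
  \<open>\<alpha>\<^sub>k\<close> and \<open>\<pi>(\<eta>)\<close> is orthogonal to \<open>H\<close> and makes a non-acute angle with every \<open>\<alpha>\<^sub>k\<close>.
  Hence \<open>\<eta>\<^sub>1 \<bullet> \<pi>(\<eta>\<^sub>1) = \<parallel>\<pi>(\<eta>\<^sub>1)\<parallel>\<^sup>2\<close>, while \<open>\<eta>\<^sub>j \<bullet> \<pi>(\<eta>\<^sub>1) \<le> \<pi>(\<eta>\<^sub>j) \<bullet> \<pi>(\<eta>\<^sub>1) \<le> \<parallel>\<pi>(\<eta>\<^sub>j)\<parallel> \<parallel>\<pi>(\<eta>\<^sub>1)\<parallel>\<close>,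
  and the strict norm inequality finishes the argument.
  An admissible subset always exists: projecting \<open>\<eta>\<close> onto the closed convex cone
  generated by the \<open>\<alpha>\<^sub>k\<close> and taking those \<open>\<alpha>\<^sub>k\<close> orthogonal to the residual works.
\<close>

lemma orth_proj_in:
  fixes V :: "'a::euclidean_space set"
  assumes "subspace V"
  shows "orth_proj V x \<in> V"
  unfolding orth_proj_def
  using assms by (intro closest_point_in_set closed_subspace) (auto dest: subspace_0)

lemma orth_proj_perp_orthogonal:
  fixes V :: "'a::euclidean_space set"
  assumes V: "subspace V" and v: "v \<in> V"
  shows "orth_proj_perp V x \<bullet> v = 0"
proof -
  let ?p = "orth_proj V x"
  have p: "?p \<in> V" using orth_proj_in[OF V] .
  have "?p + v \<in> V" "?p - v \<in> V" using p v V by (auto intro: subspace_add subspace_diff)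
  then have "(x - ?p) \<bullet> ((?p + v) - ?p) \<le> 0" "(x - ?p) \<bullet> ((?p - v) - ?p) \<le> 0"
    using closest_point_dot[OF subspace_imp_convex[OF V] closed_subspace[OF V]]
    unfolding orth_proj_def by blast+
  then show ?thesis by (simp add: orth_proj_perp_def inner_diff_right)
qed

lemma orth_proj_eqI:
  fixes V :: "'a::euclidean_space set"
  assumes V: "subspace V" and p: "p \<in> V" and orth: "\<And>v. v \<in> V \<Longrightarrow> (x - p) \<bullet> v = 0"
  shows "orth_proj V x = p"
proof -
  have "dist x p \<le> dist x z" if z: "z \<in> V" for z
  proof -
    have "(x - p) \<bullet> (p - z) = 0" using p z V by (intro orth subspace_diff)
    then have "(norm (x - z))\<^sup>2 = (norm (x - p))\<^sup>2 + (norm (p - z))\<^sup>2"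
      by (metis norm_add_Pythagorean orthogonal_def diff_add_cancel add_diff_eq)
    then show ?thesis using power2_le_imp_le[of "norm (x - p)" "norm (x - z)"] by (simp add: dist_norm)
  qed
  then show ?thesis unfolding orth_proj_def
    by (metis closest_point_unique subspace_imp_convex closed_subspace V p)
qed

lemma convex_cone_hull_nonneg_combination:
  fixes alpha :: "nat \<Rightarrow> 'a::real_vector"
  assumes "finite I" and "x \<in> convex_cone hull (alpha ` I)"
  obtains g where "\<forall>k\<in>I. g k \<ge> 0" and "x = (\<Sum>k\<in>I. g k *\<^sub>R alpha k)"
proof -
  let ?C = "{\<Sum>k\<in>I. g k *\<^sub>R alpha k | g. \<forall>k\<in>I. g k \<ge> 0}"
  have "alpha k \<in> ?C" if "k \<in> I" for k
  proof -
    have "(\<Sum>i\<in>I. (if i = k then 1 else 0) *\<^sub>R alpha i) = (\<Sum>i\<in>I. if i = k then alpha i else 0)"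
      by (rule sum.cong) auto
    also have "\<dots> = alpha k" using that assms(1) by simp
    finally have "alpha k = (\<Sum>i\<in>I. (if i = k then 1 else 0) *\<^sub>R alpha i)" ..
    moreover have "\<forall>i\<in>I. (0::real) \<le> (if i = k then 1 else 0)" by simp
    ultimately show ?thesis
      by (intro CollectI exI[of _ "\<lambda>i. if i = k then 1 else 0"] conjI) assumption+
  qed
  moreover have "convex_cone ?C"
    unfolding convex_cone_iff
  proof (intro conjI ballI allI impI)
    show "0 \<in> ?C" by (rule CollectI, rule exI[of _ "\<lambda>_. 0"]) simp
  next
    fix x y assume "x \<in> ?C" "y \<in> ?C"
    then obtain g h where "\<forall>k\<in>I. g k \<ge> 0" "x = (\<Sum>k\<in>I. g k *\<^sub>R alpha k)"
      and "\<forall>k\<in>I. h k \<ge> 0" "y = (\<Sum>k\<in>I. h k *\<^sub>R alpha k)" by blast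
    then show "x + y \<in> ?C"
      by (intro CollectI exI[of _ "\<lambda>k. g k + h k"])
         (simp add: scaleR_add_left sum.distrib)
  next
    fix x and c :: real assume "x \<in> ?C" "0 \<le> c"
    then obtain g where "\<forall>k\<in>I. g k \<ge> 0" "x = (\<Sum>k\<in>I. g k *\<^sub>R alpha k)" by blast
    with \<open>0 \<le> c\<close> show "c *\<^sub>R x \<in> ?C"
      by (intro CollectI exI[of _ "\<lambda>k. c * g k"]) (simp add: scaleR_sum_right)
  qed
  ultimately have "convex_cone hull (alpha ` I) \<subseteq> ?C" by (intro hull_minimal) auto
  with assms(2) that show thesis by blast
qed

text \<open>Half of Moreau's decomposition theorem for closed convex cones.\<close>

lemma closest_point_convex_cone:
  fixes C :: "'a::euclidean_space set" and x :: 'a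
  assumes C: "convex_cone C" "closed C"
  defines "p \<equiv> closest_point C x"
  shows "(x - p) \<bullet> p = 0" and "\<And>c. c \<in> C \<Longrightarrow> (x - p) \<bullet> c \<le> 0"
proof -
  have cvx: "convex C" and ne: "C \<noteq> {}" using C(1) by (auto simp: convex_cone_def)
  have p: "p \<in> C" unfolding p_def using C(2) ne by (rule closest_point_in_set)
  have dot: "(x - p) \<bullet> (c - p) \<le> 0" if "c \<in> C" for c
    unfolding p_def by (rule closest_point_dot[OF cvx C(2) that])
  have "(x - p) \<bullet> p \<ge> 0" using dot[OF convex_cone_contains_0[OF C(1)]] by simp
  moreover have "(x - p) \<bullet> p \<le> 0"
    using dot[OF convex_cone_scaleR[OF C(1), of 2 p]] p by (simp add: algebra_simps inner_diff_right)
  ultimately show "(x - p) \<bullet> p = 0" by simp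
  show "(x - p) \<bullet> c \<le> 0" if "c \<in> C" for c
    using dot[OF convex_cone_add[OF C(1) p that]] by simp
qed

lemma canon_subset_exists:
  fixes alpha :: "nat \<Rightarrow> 'a::euclidean_space"
  shows "\<exists>S. canon_subset alpha K eta S"
proof -
  let ?C = "convex_cone hull (alpha ` {1..K})"
  have C: "convex_cone ?C" "closed ?C"
    by (simp_all add: convex_cone_convex_cone_hull closed_convex_cone_hull)
  define p where "p = closest_point ?C eta"
  define r where "r = eta - p"
  have rp: "r \<bullet> p = 0"
    using closest_point_convex_cone(1)[OF C, of eta] unfolding r_def p_def .
  have r_cone: "r \<bullet> c \<le> 0" if "c \<in> ?C" for c
    using closest_point_convex_cone(2)[OF C that] unfolding r_def p_def .
  have ra: "alpha k \<bullet> r \<le> 0" if "k \<in> {1..K}" for k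
    using r_cone[of "alpha k"] that by (simp add: hull_inc inner_commute)
  have "p \<in> ?C" unfolding p_def using C by (intro closest_point_in_set) (auto simp: convex_cone_def)
  then obtain g where g: "\<forall>k\<in>{1..K}. g k \<ge> 0" and pg: "p = (\<Sum>k\<in>{1..K}. g k *\<^sub>R alpha k)"
    by (rule convex_cone_hull_nonneg_combination[OF finite_atLeastAtMost])
  define S where "S = {k\<in>{1..K}. alpha k \<bullet> r = 0}"
  \<comment> \<open>\<open>r \<bullet> p\<close> is a sum of nonpositive terms \<open>g\<^sub>k (\<alpha>\<^sub>k \<bullet> r)\<close>, so \<open>g\<close> vanishes off \<open>S\<close>.\<close>
  have "(\<Sum>k\<in>{1..K}. - (g k * (alpha k \<bullet> r))) = 0"
    using rp by (simp add: pg inner_sum_right inner_commute sum_negf)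
  then have "\<forall>k\<in>{1..K}. g k * (alpha k \<bullet> r) = 0"
    using g ra by (subst (asm) sum_nonneg_eq_0_iff) (auto simp: mult_nonneg_nonpos)
  then have pS: "p = (\<Sum>k\<in>S. g k *\<^sub>R alpha k)"
    unfolding pg S_def by (intro sum.mono_neutral_right) auto
  have proj: "orth_proj (span (alpha ` S)) eta = p"
  proof (rule orth_proj_eqI)
    show "p \<in> span (alpha ` S)" unfolding pS by (intro span_sum span_scale span_base) auto
    have "orthogonal r y" if "y \<in> alpha ` S" for y
      using that unfolding S_def orthogonal_def by (auto simp: inner_commute)
    then show "(eta - p) \<bullet> v = 0" if "v \<in> span (alpha ` S)" for v
      using orthogonal_to_span[OF that] unfolding r_def orthogonal_def by blast
  qed simp
  show ?thesis
    unfolding canon_subset_def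
  proof (intro exI[of _ S] conjI)
    show "S \<subseteq> {1..K}" by (auto simp: S_def)
    show "\<exists>\<gamma>. (\<forall>k\<in>S. 0 \<le> \<gamma> k) \<and> orth_proj (span (alpha ` S)) eta = (\<Sum>k\<in>S. \<gamma> k *\<^sub>R alpha k)"
      using g pS proj unfolding S_def by (intro exI[of _ g]) auto
    show "\<forall>k\<in>{1..K} - S. alpha k \<bullet> orth_proj_perp (span (alpha ` S)) eta < 0"
      using ra proj unfolding orth_proj_perp_def r_def S_def by (auto simp: order_less_le)
  qed
qed

lemma canon_proj_decomposition:
  fixes alpha :: "nat \<Rightarrow> 'a::euclidean_space"
  obtains S g where "S \<subseteq> {1..K}" and "\<forall>k\<in>S. g k \<ge> 0"
    and "eta = (\<Sum>k\<in>S. g k *\<^sub>R alpha k) + canon_proj alpha K eta"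
    and "\<forall>k\<in>S. alpha k \<bullet> canon_proj alpha K eta = 0"
    and "\<forall>k\<in>{1..K}. alpha k \<bullet> canon_proj alpha K eta \<le> 0"
proof (cases "eta = 0")
  case True
  then show thesis by (intro that[of "{}"]) (auto simp: canon_proj_def)
next
  case False
  define S where "S = (SOME S. canon_subset alpha K eta S)"
  have "canon_subset alpha K eta S"
    unfolding S_def using canon_subset_exists by (rule someI_ex)
  then obtain g where SK: "S \<subseteq> {1..K}" and g: "\<forall>k\<in>S. g k \<ge> 0"
    and proj: "orth_proj (span (alpha ` S)) eta = (\<Sum>k\<in>S. g k *\<^sub>R alpha k)"
    and outside: "\<forall>k\<in>{1..K} - S. alpha k \<bullet> orth_proj_perp (span (alpha ` S)) eta < 0"
    unfolding canon_subset_def by blast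
  have pi: "canon_proj alpha K eta = orth_proj_perp (span (alpha ` S)) eta"
    unfolding canon_proj_def S_def using False by simp
  have inside: "\<forall>k\<in>S. alpha k \<bullet> canon_proj alpha K eta = 0"
  proof
    fix k assume "k \<in> S"
    then have "alpha k \<in> span (alpha ` S)" by (simp add: span_base)
    then show "alpha k \<bullet> canon_proj alpha K eta = 0"
      unfolding pi using orth_proj_perp_orthogonal[OF subspace_span] by (simp add: inner_commute)
  qed
  show thesis
  proof (rule that[OF SK g _ inside])
    show "eta = (\<Sum>k\<in>S. g k *\<^sub>R alpha k) + canon_proj alpha K eta"
      unfolding pi orth_proj_perp_def proj[symmetric] by simp
    show "\<forall>k\<in>{1..K}. alpha k \<bullet> canon_proj alpha K eta \<le> 0"
      using inside outside unfolding pi by (metis Diff_iff order_refl less_imp_le)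
  qed
qed

lemma inner_canon_proj_self:
  fixes alpha :: "nat \<Rightarrow> 'a::euclidean_space"
  shows "eta \<bullet> canon_proj alpha K eta = canon_proj alpha K eta \<bullet> canon_proj alpha K eta"
proof -
  let ?p = "canon_proj alpha K eta"
  obtain S g where dec: "eta = (\<Sum>k\<in>S. g k *\<^sub>R alpha k) + ?p"
    and orth: "\<forall>k\<in>S. alpha k \<bullet> ?p = 0"
    by (rule canon_proj_decomposition)
  have "eta \<bullet> ?p = ((\<Sum>k\<in>S. g k *\<^sub>R alpha k) + ?p) \<bullet> ?p"
    using dec by (rule arg_cong)
  also have "\<dots> = ?p \<bullet> ?p" using orth by (simp add: inner_add_left inner_sum_left)
  finally show ?thesis .
qed

lemma inner_canon_proj_le:
  fixes alpha :: "nat \<Rightarrow> 'a::euclidean_space"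
  shows "eta' \<bullet> canon_proj alpha K eta \<le> canon_proj alpha K eta' \<bullet> canon_proj alpha K eta"
proof -
  let ?p = "canon_proj alpha K eta"
  obtain S g where SK: "S \<subseteq> {1..K}" and g: "\<forall>k\<in>S. g k \<ge> 0"
    and dec: "eta' = (\<Sum>k\<in>S. g k *\<^sub>R alpha k) + canon_proj alpha K eta'"
    by (rule canon_proj_decomposition)
  have "\<forall>k\<in>{1..K}. alpha k \<bullet> ?p \<le> 0"
    using canon_proj_decomposition[where eta = eta] by blast
  with SK g have "(\<Sum>k\<in>S. g k * (alpha k \<bullet> ?p)) \<le> 0"
    by (intro sum_nonpos) (auto intro: mult_nonneg_nonpos)
  moreover have "eta' \<bullet> ?p = ((\<Sum>k\<in>S. g k *\<^sub>R alpha k) + canon_proj alpha K eta') \<bullet> ?p"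
    using dec by (rule arg_cong)
  then have "eta' \<bullet> ?p = (\<Sum>k\<in>S. g k * (alpha k \<bullet> ?p)) + canon_proj alpha K eta' \<bullet> ?p"
    by (simp only: inner_add_left inner_sum_left inner_scaleR_left)
  ultimately show ?thesis by simp
qed

theorem corollary2:
  fixes alpha :: "nat \<Rightarrow> 'a::euclidean_space" and eta :: "nat \<Rightarrow> 'a"
    and K J :: nat
  assumes alpha_nz: "\<forall>k\<in>{1..K}. alpha k \<noteq> 0"
    and dom: "\<forall>j\<in>{2..J}. norm (canon_proj alpha K (eta j)) < norm (canon_proj alpha K (eta 1))"
  shows "\<forall>j\<in>{2..J}. (eta 1 - eta j) \<bullet> canon_proj alpha K (eta 1) > 0"
proof
  fix j assume j: "j \<in> {2..J}"
  define p1 where "p1 = canon_proj alpha K (eta 1)"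
  define pj where "pj = canon_proj alpha K (eta j)"
  have "norm pj < norm p1" using dom j unfolding p1_def pj_def by auto
  have "eta j \<bullet> p1 \<le> pj \<bullet> p1" unfolding p1_def pj_def by (rule inner_canon_proj_le)
  also have "\<dots> \<le> norm pj * norm p1" by (rule norm_cauchy_schwarz)
  also have "\<dots> < norm p1 * norm p1"
    using \<open>norm pj < norm p1\<close> by (intro mult_strict_right_mono) (auto intro: le_less_trans[OF norm_ge_zero])
  also have "\<dots> = eta 1 \<bullet> p1"
    unfolding p1_def inner_canon_proj_self by (simp add: dot_square_norm power2_eq_square)
  finally show "(eta 1 - eta j) \<bullet> canon_proj alpha K (eta 1) > 0"
    unfolding p1_def[symmetric] by (simp add: inner_diff_left)
qed

end
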